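(* Let $B$ be a noetherian connected graded algebra over $\Bbbk$ that satisfies a polynomial identity and is generated in degree $1$. If every finite linear combination of homogeneous elements of odd degree is nilpotent, then $B$ is finite-dimensional over $\Bbbk$.
   Context: $\Bbbk$ is an algebraically closed field of characteristic zero. A connected graded algebra is $B=\bigoplus_{i\ge0}B_i$ with $B_0=\Bbbk$ and each $B_i$ finite-dimensional. *)

theory Defs
  imports Main "HOL-Computational_Algebra.Polynomial"
begin

definition alg_closed :: "'k::field itself \<Rightarrow> bool" where
  "alg_closed _ \<longleftrightarrow> (\<forall>p::'k poly. 0 < degree p \<longrightarrow> (\<exists>x. poly p x = 0))"

text \<open>The algebra B is the whole type 'b (a unital ring), made a k-algebra by smul.\<close>
definition k_algebra :: "('k::field \<Rightarrow> 'b::ring_1 \<Rightarrow> 'b) \<Rightarrow> bool" where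
  "k_algebra smul \<longleftrightarrow> vector_space smul \<and>
     (\<forall>c x y. smul c (x * y) = smul c x * y \<and> smul c (x * y) = x * smul c y)"

definition connected_graded :: "('k::field \<Rightarrow> 'b::ring_1 \<Rightarrow> 'b) \<Rightarrow> (nat \<Rightarrow> 'b set) \<Rightarrow> bool" where
  "connected_graded smul Bg \<longleftrightarrow>
     (\<forall>i. module.subspace smul (Bg i)) \<and>
     (1::'b) \<noteq> 0 \<and> Bg 0 = range (\<lambda>c. smul c 1) \<and>
     (\<forall>i. \<exists>S. finite S \<and> module.span smul S = Bg i) \<and>
     (\<forall>i j x y. x \<in> Bg i \<longrightarrow> y \<in> Bg j \<longrightarrow> x * y \<in> Bg (i + j)) \<and>
     (\<forall>x. \<exists>N b. (\<forall>i<N. b i \<in> Bg i) \<and> x = (\<Sum>i<N. b i)) \<and>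
     (\<forall>N b. (\<forall>i<N. b i \<in> Bg i) \<longrightarrow> (\<Sum>i<N. b i) = 0 \<longrightarrow> (\<forall>i<N. b i = 0))"

definition generated_in_degree_1 :: "('k::field \<Rightarrow> 'b::ring_1 \<Rightarrow> 'b) \<Rightarrow> (nat \<Rightarrow> 'b set) \<Rightarrow> bool" where
  "generated_in_degree_1 smul Bg \<longleftrightarrow>
     module.span smul {prod_list xs | xs. set xs \<subseteq> Bg 1} = UNIV"

definition left_ideal :: "('k::field \<Rightarrow> 'b::ring_1 \<Rightarrow> 'b) \<Rightarrow> 'b set \<Rightarrow> bool" where
  "left_ideal smul I \<longleftrightarrow> module.subspace smul I \<and> (\<forall>a x. x \<in> I \<longrightarrow> a * x \<in> I)"

definition right_ideal :: "('k::field \<Rightarrow> 'b::ring_1 \<Rightarrow> 'b) \<Rightarrow> 'b set \<Rightarrow> bool" where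
  "right_ideal smul I \<longleftrightarrow> module.subspace smul I \<and> (\<forall>a x. x \<in> I \<longrightarrow> x * a \<in> I)"

definition noetherian_alg :: "('k::field \<Rightarrow> 'b::ring_1 \<Rightarrow> 'b) \<Rightarrow> bool" where
  "noetherian_alg smul \<longleftrightarrow>
     (\<forall>I :: nat \<Rightarrow> 'b set. (\<forall>n. left_ideal smul (I n)) \<and> incseq I \<longrightarrow> (\<exists>m. \<forall>n\<ge>m. I n = I m)) \<and>
     (\<forall>I :: nat \<Rightarrow> 'b set. (\<forall>n. right_ideal smul (I n)) \<and> incseq I \<longrightarrow> (\<exists>m. \<forall>n\<ge>m. I n = I m))"

text \<open>Polynomial identity: a nonzero element f of the free algebra k<x_0, x_1, ...>,
  given by its finitely supported coefficient function on words (lists of variable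
  indices), vanishing under every substitution of the variables by elements of B.\<close>
definition satisfies_PI :: "('k::field \<Rightarrow> 'b::ring_1 \<Rightarrow> 'b) \<Rightarrow> bool" where
  "satisfies_PI smul \<longleftrightarrow>
     (\<exists>f :: nat list \<Rightarrow> 'k. finite {w. f w \<noteq> 0} \<and> (\<exists>w. f w \<noteq> 0) \<and>
        (\<forall>a :: nat \<Rightarrow> 'b. (\<Sum>w\<in>{w. f w \<noteq> 0}. smul (f w) (prod_list (map a w))) = 0))"

definition finite_dim_alg :: "('k::field \<Rightarrow> 'b::ring_1 \<Rightarrow> 'b) \<Rightarrow> bool" where
  "finite_dim_alg smul \<longleftrightarrow> (\<exists>S. finite S \<and> module.span smul S = UNIV)"

end

theory Submission
  imports Defs
begin

text \<open>The chain
  condition yields a maximal nilpotent ideal \<open>N\<close>, which is semiprime. Split \<open>B\<close> into its even and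
  odd part. If some odd element were outside \<open>N\<close>, choose a homogeneous \<open>a \<notin> N\<close>, killed on the
  left by every element annihilating the odd part, whose left annihilator modulo \<open>N\<close> is maximal.
  Levitzki's argument with the nilpotent elements \<open>a y\<close> gives \<open>a y a \<in> N\<close> for homogeneous \<open>y\<close> of
  opposite parity, and this produces an odd \<open>x \<notin> N\<close> with \<open>x e x \<in> N\<close> for all even \<open>e\<close>. Then every
  \<open>x r\<close> is nilpotent modulo \<open>N\<close>, and Levitzki's argument inside \<open>x B\<close> contradicts semiprimeness.
  Hence \<open>B\<^sub>1 \<subseteq> N\<close>, so long products of degree-one elements vanish and \<open>B\<close> is spanned by the
  finitely many short words in a basis of \<open>B\<^sub>1\<close>.\<close>

definition two_sided_ideal :: "('k::field \<Rightarrow> 'b::ring_1 \<Rightarrow> 'b) \<Rightarrow> 'b set \<Rightarrow> bool" where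
  "two_sided_ideal smul I \<longleftrightarrow> left_ideal smul I \<and> right_ideal smul I"

definition nilpotent_set :: "'b::ring_1 set \<Rightarrow> bool" where
  "nilpotent_set I \<longleftrightarrow> (\<exists>m. \<forall>xs. length xs = m \<longrightarrow> set xs \<subseteq> I \<longrightarrow> prod_list xs = 0)"

lemma nilpotent_set_subset: "nilpotent_set I \<Longrightarrow> J \<subseteq> I \<Longrightarrow> nilpotent_set J"
  unfolding nilpotent_set_def by blast

lemma nilpotent_set_zero: "nilpotent_set {0::'b::ring_1}"
  unfolding nilpotent_set_def
proof (intro exI[of _ 1] allI impI)
  fix xs :: "'b list" assume "length xs = 1" "set xs \<subseteq> {0}"
  then show "prod_list xs = 0" by (cases xs) auto
qed

lemma prod_list_pairs:
  assumes "\<forall>x\<in>K. \<forall>y\<in>K. x * y \<in> M"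
  shows "length xs = 2 * k \<Longrightarrow> set xs \<subseteq> K \<Longrightarrow>
    \<exists>ys. length ys = k \<and> set ys \<subseteq> M \<and> prod_list xs = (prod_list ys :: 'b::monoid_mult)"
proof (induct k arbitrary: xs)
  case 0 then show ?case by auto
next
  case (Suc k)
  then obtain a b rest where xs: "xs = a # b # rest"
    by (cases xs; cases "tl xs") auto
  with Suc.prems have "length rest = 2 * k" "set rest \<subseteq> K" "a \<in> K" "b \<in> K" by auto
  with Suc.hyps obtain ys where "length ys = k" "set ys \<subseteq> M" "prod_list rest = prod_list ys"
    by blast
  moreover have "a * b \<in> M" using assms \<open>a \<in> K\<close> \<open>b \<in> K\<close> by blast
  ultimately show ?case using xs
    by (intro exI[of _ "(a * b) # ys"]) (auto simp: mult.assoc)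
qed

lemma nilpotent_set_if_products_in:
  fixes K M :: "'b::ring_1 set"
  assumes "nilpotent_set M" and "\<forall>x\<in>K. \<forall>y\<in>K. x * y \<in> M"
  shows "nilpotent_set K"
proof -
  obtain m where m: "\<forall>xs. length xs = m \<longrightarrow> set xs \<subseteq> M \<longrightarrow> prod_list xs = 0"
    using assms(1) unfolding nilpotent_set_def by blast
  show ?thesis unfolding nilpotent_set_def
  proof (intro exI[of _ "2 * m"] allI impI)
    fix xs :: "'b list" assume "length xs = 2 * m" "set xs \<subseteq> K"
    then obtain ys where "length ys = m" "set ys \<subseteq> M" "prod_list xs = prod_list ys"
      using prod_list_pairs[OF assms(2)] by blast
    then show "prod_list xs = 0" using m by simp
  qed
qed

lemma power_mult_commute: "(a * y) ^ j * a = a * (y * a) ^ j" for a y :: "'b::monoid_mult"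
  by (induct j) (simp_all add: mult.assoc)

locale unital_algebra = vector_space smul
  for smul :: "'k::field \<Rightarrow> 'b::ring_1 \<Rightarrow> 'b" +
  assumes scale_mult_left: "\<And>c x y. smul c (x * y) = smul c x * y"
    and scale_mult_right: "\<And>c x y. smul c (x * y) = x * smul c y"
begin

lemma span_mult:
  assumes x: "x \<in> span A" and y: "y \<in> span C"
    and h: "\<And>a c. a \<in> A \<Longrightarrow> c \<in> C \<Longrightarrow> a * c \<in> span D"
  shows "x * y \<in> span D"
proof -
  have inner: "a * y \<in> span D" if a: "a \<in> A" for a
    using y
  proof (induct rule: span_induct)
    case base
    show ?case unfolding subspace_def
      by (auto simp: span_zero span_add distrib_left span_scale scale_mult_right[symmetric])
  next
    case (step c) then show ?case using h a by blast
  qed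
  show ?thesis using x
  proof (induct rule: span_induct)
    case base
    show ?case unfolding subspace_def
      by (auto simp: span_zero span_add distrib_right span_scale scale_mult_left[symmetric])
  next
    case (step a) then show ?case using inner by blast
  qed
qed

lemma prod_list_in_span_words:
  "set xs \<subseteq> span S \<Longrightarrow>
    prod_list xs \<in> span {prod_list ys | ys. set ys \<subseteq> S \<and> length ys = length xs}"
proof (induct xs)
  case Nil then show ?case by (auto intro!: span_base)
next
  case (Cons x xs)
  then have x: "x \<in> span S"
    and ih: "prod_list xs \<in> span {prod_list ys | ys. set ys \<subseteq> S \<and> length ys = length xs}"
    by auto
  have "x * prod_list xs \<in> span {prod_list ys | ys. set ys \<subseteq> S \<and> length ys = length (x # xs)}"
  proof (rule span_mult[OF x ih])
    fix a c assume "a \<in> S" "c \<in> {prod_list ys | ys. set ys \<subseteq> S \<and> length ys = length xs}"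
    then obtain ys where "c = prod_list ys" "set ys \<subseteq> S" "length ys = length xs" by blast
    then show "a * c \<in> span {prod_list ys | ys. set ys \<subseteq> S \<and> length ys = length (x # xs)}"
      using \<open>a \<in> S\<close> by (intro span_base CollectI exI[of _ "a # ys"]) auto
  qed
  then show ?case by simp
qed

lemma finite_dim_if_nilpotent_generators:
  assumes gen: "span {prod_list xs | xs. set xs \<subseteq> V} = UNIV"
    and S: "finite S" "span S = V"
    and nil: "nilpotent_set V"
  shows "\<exists>T. finite T \<and> span T = UNIV"
proof -
  obtain m where m: "\<And>xs. length xs = m \<Longrightarrow> set xs \<subseteq> V \<Longrightarrow> prod_list xs = 0"
    using nil unfolding nilpotent_set_def by blast
  define T where "T = prod_list ` {ys. set ys \<subseteq> S \<and> length ys \<le> m}"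
  have "finite T"
    unfolding T_def by (rule finite_imageI[OF finite_lists_length_le[OF S(1)]])
  have "prod_list xs \<in> span T" if xs: "set xs \<subseteq> V" for xs
  proof (cases "m \<le> length xs")
    case True
    have "prod_list (take m xs) = 0"
      using True xs set_take_subset[of m xs] by (intro m) auto
    then have "prod_list xs = 0"
      by (metis append_take_drop_id mult_zero_left prod_list.append)
    then show ?thesis by (simp add: span_zero)
  next
    case False
    have "{prod_list ys | ys. set ys \<subseteq> S \<and> length ys = length xs} \<subseteq> T"
      unfolding T_def using False by auto
    with prod_list_in_span_words[of xs S] xs S(2) show ?thesis
      using span_mono by blast
  qed
  then have "span {prod_list xs | xs. set xs \<subseteq> V} \<subseteq> span T"
    by (intro span_minimal[OF _ subspace_span]) blast
  with gen \<open>finite T\<close> show ?thesis by blast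
qed

lemma two_sided_idealI:
  assumes "subspace K" "\<And>a x. x \<in> K \<Longrightarrow> a * x \<in> K" "\<And>a x. x \<in> K \<Longrightarrow> x * a \<in> K"
  shows "two_sided_ideal smul K"
  using assms unfolding two_sided_ideal_def left_ideal_def right_ideal_def by blast

lemma two_sided_ideal_sum:
  assumes I: "two_sided_ideal smul I" and J: "two_sided_ideal smul J"
  shows "two_sided_ideal smul {x + y | x y. x \<in> I \<and> y \<in> J}" (is "two_sided_ideal smul ?K")
proof -
  have I_sub: "subspace I" and I_left: "\<And>a x. x \<in> I \<Longrightarrow> a * x \<in> I"
    and I_right: "\<And>a x. x \<in> I \<Longrightarrow> x * a \<in> I"
    using I unfolding two_sided_ideal_def left_ideal_def right_ideal_def by blast+
  have J_sub: "subspace J" and J_left: "\<And>a x. x \<in> J \<Longrightarrow> a * x \<in> J"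
    and J_right: "\<And>a x. x \<in> J \<Longrightarrow> x * a \<in> J"
    using J unfolding two_sided_ideal_def left_ideal_def right_ideal_def by blast+
  show ?thesis
  proof (intro two_sided_idealI, unfold subspace_def, intro conjI allI impI ballI)
    show "0 \<in> ?K" using subspace_0[OF I_sub] subspace_0[OF J_sub] by force
  next
    fix x y assume "x \<in> ?K" "y \<in> ?K"
    then obtain i j i' j' where "x = i + j" "y = i' + j'" "i \<in> I" "j \<in> J" "i' \<in> I" "j' \<in> J"
      by blast
    then show "x + y \<in> ?K"
      by (intro CollectI exI[of _ "i + i'"] exI[of _ "j + j'"])
         (auto simp: subspace_add[OF I_sub] subspace_add[OF J_sub] algebra_simps)
  next
    fix c x assume "x \<in> ?K"
    then obtain i j where "x = i + j" "i \<in> I" "j \<in> J" by blast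
    then show "smul c x \<in> ?K"
      using subspace_scale[OF I_sub] subspace_scale[OF J_sub]
      by (intro CollectI exI[of _ "smul c i"] exI[of _ "smul c j"]) (auto simp: scale_right_distrib)
  next
    fix a x assume "x \<in> ?K"
    then obtain i j where "x = i + j" "i \<in> I" "j \<in> J" by blast
    then show "a * x \<in> ?K"
      by (intro CollectI exI[of _ "a * i"] exI[of _ "a * j"]) (auto simp: I_left J_left distrib_left)
  next
    fix a x assume "x \<in> ?K"
    then obtain i j where "x = i + j" "i \<in> I" "j \<in> J" by blast
    then show "x * a \<in> ?K"
      by (intro CollectI exI[of _ "i * a"] exI[of _ "j * a"]) (auto simp: I_right J_right distrib_right)
  qed
qed


end

locale left_noetherian_algebra = unital_algebra +
  assumes left_ideal_acc:
    "\<And>I. (\<forall>n. left_ideal smul (I n)) \<Longrightarrow> incseq I \<Longrightarrow> \<exists>m. \<forall>n\<ge>m. I n = I m"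
begin

lemma ex_maximal_left_ideal:
  assumes F: "\<And>I. I \<in> F \<Longrightarrow> left_ideal smul I" and "M0 \<in> F"
  shows "\<exists>M\<in>F. \<forall>I\<in>F. M \<subseteq> I \<longrightarrow> I = M"
proof (rule ccontr)
  assume "\<not> ?thesis"
  then have "\<And>M. M \<in> F \<Longrightarrow> \<exists>I. I \<in> F \<and> M \<subset> I" by blast
  then obtain g where g: "\<And>M. M \<in> F \<Longrightarrow> g M \<in> F \<and> M \<subset> g M" by metis
  define f where "f n = (g ^^ n) M0" for n
  have f_in: "f n \<in> F" for n
  proof (induct n)
    case 0 show ?case unfolding f_def using \<open>M0 \<in> F\<close> by simp
  next
    case (Suc n) then show ?case unfolding f_def using g by simp
  qed
  have f_less: "f n \<subset> f (Suc n)" for n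
    using g[OF f_in[of n]] by (simp add: f_def)
  have "incseq f" by (rule incseq_SucI) (use f_less in blast)
  moreover have "\<forall>n. left_ideal smul (f n)" using F f_in by blast
  ultimately obtain m where "\<forall>n\<ge>m. f n = f m" using left_ideal_acc[of f] by blast
  then have "f (Suc m) = f m" using le_SucI by blast
  with f_less[of m] show False by simp
qed

lemma ex_maximal_nilpotent_ideal:
  "\<exists>N. two_sided_ideal smul N \<and> nilpotent_set N \<and>
    (\<forall>I. two_sided_ideal smul I \<longrightarrow> nilpotent_set I \<longrightarrow> N \<subseteq> I \<longrightarrow> I = N)"
proof -
  have "two_sided_ideal smul {0}"
    unfolding two_sided_ideal_def left_ideal_def right_ideal_def by simp
  then have "\<exists>M\<in>{I. two_sided_ideal smul I \<and> nilpotent_set I}.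
      \<forall>I\<in>{I. two_sided_ideal smul I \<and> nilpotent_set I}. M \<subseteq> I \<longrightarrow> I = M"
    using nilpotent_set_zero
    by (intro ex_maximal_left_ideal[of _ "{0}"]) (auto simp: two_sided_ideal_def)
  then show ?thesis by blast
qed

end

section \<open>The maximal nilpotent ideal\<close>

locale maximal_nilpotent_ideal = left_noetherian_algebra +
  fixes N :: "'b set"
  assumes ideal_N: "two_sided_ideal smul N" and nilpotent_N: "nilpotent_set N"
    and maximal_N: "\<And>I. two_sided_ideal smul I \<Longrightarrow> nilpotent_set I \<Longrightarrow> N \<subseteq> I \<Longrightarrow> I = N"
begin

lemma subspace_N: "subspace N"
  using ideal_N unfolding two_sided_ideal_def left_ideal_def by blast

lemma N_zero: "0 \<in> N" using subspace_N subspace_0 by blast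
lemma N_add: "x \<in> N \<Longrightarrow> y \<in> N \<Longrightarrow> x + y \<in> N" using subspace_N subspace_add by blast
lemma N_minus: "x \<in> N \<Longrightarrow> - x \<in> N" using subspace_N subspace_neg by blast
lemma N_diff: "x \<in> N \<Longrightarrow> y \<in> N \<Longrightarrow> x - y \<in> N" using subspace_N subspace_diff by blast
lemma N_mult_left: "x \<in> N \<Longrightarrow> a * x \<in> N"
  using ideal_N unfolding two_sided_ideal_def left_ideal_def by blast
lemma N_mult_right: "x \<in> N \<Longrightarrow> x * a \<in> N"
  using ideal_N unfolding two_sided_ideal_def right_ideal_def by blast

lemma ideal_subset_N_if_square:
  assumes J: "two_sided_ideal smul J" and JJ: "\<forall>x\<in>J. \<forall>y\<in>J. x * y \<in> N"
  shows "J \<subseteq> N"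
proof -
  define K where "K = {n + j | n j. n \<in> N \<and> j \<in> J}"
  have J_sub: "subspace J" using J unfolding two_sided_ideal_def left_ideal_def by blast
  have "\<forall>x\<in>K. \<forall>y\<in>K. x * y \<in> N"
  proof (intro ballI)
    fix x y assume "x \<in> K" "y \<in> K"
    then obtain n j n' j' where xy: "x = n + j" "y = n' + j'"
      and "n \<in> N" "j \<in> J" "n' \<in> N" "j' \<in> J"
      unfolding K_def by blast
    then have "n * n' + n * j' + j * n' + j * j' \<in> N"
      using JJ by (intro N_add) (auto intro: N_mult_left N_mult_right)
    then show "x * y \<in> N" unfolding xy by (simp add: distrib_left distrib_right add_ac)
  qed
  then have "nilpotent_set K" using nilpotent_N by (rule nilpotent_set_if_products_in[rotated])
  moreover have "two_sided_ideal smul K" unfolding K_def using ideal_N J by (rule two_sided_ideal_sum)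
  moreover have "N \<subseteq> K" unfolding K_def using subspace_0[OF J_sub] by force
  ultimately have "K = N" using maximal_N by blast
  moreover have "J \<subseteq> K" unfolding K_def using N_zero by force
  ultimately show ?thesis by blast
qed

lemma two_sided_ideal_sandwich_N: "two_sided_ideal smul {x. \<forall>s. b * s * x \<in> N}"
  (is "two_sided_ideal smul ?M")
proof (intro two_sided_idealI, unfold subspace_def, intro conjI allI impI ballI)
  show "0 \<in> ?M" using N_zero by simp
next
  fix x y assume "x \<in> ?M" "y \<in> ?M" then show "x + y \<in> ?M"
    by (auto simp: distrib_left N_add)
next
  fix c x assume "x \<in> ?M" then show "smul c x \<in> ?M"
    using subspace_scale[OF subspace_N] by (auto simp: scale_mult_right[symmetric])
next
  fix a x assume x: "x \<in> ?M"
  have "b * (s * a) * x \<in> N" for s using x by blast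
  then show "a * x \<in> ?M" by (simp add: mult.assoc)
next
  fix a x assume x: "x \<in> ?M"
  have "b * s * (x * a) \<in> N" for s
    using N_mult_right[of "b * s * x" a] x by (simp add: mult.assoc)
  then show "x * a \<in> ?M" by blast
qed

lemma two_sided_ideal_N_annihilated:
  assumes M: "two_sided_ideal smul M"
  shows "two_sided_ideal smul {x \<in> M. \<forall>y\<in>M. x * y \<in> N}" (is "two_sided_ideal smul ?J")
proof -
  have M_sub: "subspace M" and M_left: "\<And>a x. x \<in> M \<Longrightarrow> a * x \<in> M"
    and M_right: "\<And>a x. x \<in> M \<Longrightarrow> x * a \<in> M"
    using M unfolding two_sided_ideal_def left_ideal_def right_ideal_def by blast+
  show ?thesis
  proof (intro two_sided_idealI, unfold subspace_def, intro conjI allI impI ballI)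
    show "0 \<in> ?J" using N_zero subspace_0[OF M_sub] by simp
  next
    fix x y assume "x \<in> ?J" "y \<in> ?J" then show "x + y \<in> ?J"
      using subspace_add[OF M_sub] by (auto simp: distrib_right N_add)
  next
    fix c x assume "x \<in> ?J" then show "smul c x \<in> ?J"
      using subspace_scale[OF M_sub] subspace_scale[OF subspace_N]
      by (auto simp: scale_mult_left[symmetric])
  next
    fix a x assume "x \<in> ?J" then show "a * x \<in> ?J"
      using M_left by (auto simp: mult.assoc N_mult_left)
  next
    fix a x assume x: "x \<in> ?J"
    have "x * (a * y) \<in> N" if "y \<in> M" for y using x M_left that by blast
    then show "x * a \<in> ?J" using x M_right by (simp add: mult.assoc)
  qed
qed

lemma N_semiprime:
  assumes b: "\<And>r. b * r * b \<in> N"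
  shows "b \<in> N"
proof -
  define M where "M = {x. \<forall>s. b * s * x \<in> N}"
  define J where "J = {x \<in> M. \<forall>y\<in>M. x * y \<in> N}"
  have "two_sided_ideal smul J"
    unfolding J_def M_def using two_sided_ideal_sandwich_N by (rule two_sided_ideal_N_annihilated)
  moreover have "\<forall>x\<in>J. \<forall>y\<in>J. x * y \<in> N" unfolding J_def by blast
  ultimately have "J \<subseteq> N" by (rule ideal_subset_N_if_square)
  moreover have "b \<in> M" unfolding M_def using b by blast
  moreover have "b * y \<in> N" if "y \<in> M" for y
  proof -
    have "b * 1 * y \<in> N" using that unfolding M_def by blast
    then show ?thesis by simp
  qed
  ultimately have "b \<in> J" unfolding J_def by blast
  with \<open>J \<subseteq> N\<close> show ?thesis by blast
qed

definition lann :: "'b \<Rightarrow> 'b set" where "lann b = {t. t * b \<in> N}"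

lemma left_ideal_lann: "left_ideal smul (lann b)"
  unfolding left_ideal_def subspace_def lann_def
  by (auto simp: N_zero distrib_right N_add scale_mult_left[symmetric]
      subspace_scale[OF subspace_N] mult.assoc N_mult_left)

lemma ex_maximal_lann:
  assumes "a0 \<notin> N" "Q a0"
  shows "\<exists>a. a \<notin> N \<and> Q a \<and> (\<forall>b. b \<notin> N \<and> Q b \<and> lann a \<subseteq> lann b \<longrightarrow> lann b = lann a)"
proof -
  have "\<exists>M\<in>lann ` {b. b \<notin> N \<and> Q b}. \<forall>I\<in>lann ` {b. b \<notin> N \<and> Q b}. M \<subseteq> I \<longrightarrow> I = M"
    by (rule ex_maximal_left_ideal[of _ "lann a0"]) (use assms left_ideal_lann in auto)
  then show ?thesis by blast
qed

text \<open>Levitzki's step: with \<open>j\<close> maximal such that \<open>c = a (y a)\<^sup>j \<notin> N\<close>, maximality of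
  \<open>lann a \<subseteq> lann c\<close> transfers \<open>a y \<in> lann c\<close> to \<open>a y \<in> lann a\<close>.\<close>
lemma sandwich_in_N_if_maximal_lann:
  assumes a: "a \<notin> N"
    and maximal: "\<forall>b. b \<notin> N \<and> Q b \<and> lann a \<subseteq> lann b \<longrightarrow> lann b = lann a"
    and Q: "\<And>j. Q (a * (y * a) ^ j)"
    and nil: "(a * y) ^ n \<in> N"
  shows "a * y * a \<in> N"
proof (rule ccontr)
  assume aya: "a * y * a \<notin> N"
  define J where "J = {j. a * (y * a) ^ j \<notin> N}"
  have "1 \<in> J" unfolding J_def using aya by (simp add: mult.assoc)
  have "J \<subseteq> {..<n}"
  proof
    fix j assume "j \<in> J"
    show "j \<in> {..<n}"
    proof (rule ccontr)
      assume "j \<notin> {..<n}"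
      then have "j = n + (j - n)" by simp
      then have "a * (y * a) ^ j = (a * y) ^ n * ((a * y) ^ (j - n) * a)"
        by (metis power_mult_commute mult.assoc power_add)
      then have "a * (y * a) ^ j \<in> N" using N_mult_right[OF nil] by simp
      with \<open>j \<in> J\<close> show False unfolding J_def by simp
    qed
  qed
  then have "finite J" by (rule finite_subset) simp
  define j where "j = Max J"
  have "j \<in> J" unfolding j_def using \<open>finite J\<close> \<open>1 \<in> J\<close> Max_in by blast
  have "Suc j \<notin> J" using Max_ge[OF \<open>finite J\<close>, of "Suc j"] unfolding j_def by auto
  define c where "c = a * (y * a) ^ j"
  have "c \<notin> N" using \<open>j \<in> J\<close> unfolding J_def c_def by simp
  have "lann a \<subseteq> lann c" unfolding lann_def c_def
    using N_mult_right by (auto simp: mult.assoc[symmetric])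
  then have eq: "lann c = lann a" using maximal \<open>c \<notin> N\<close> Q unfolding c_def by blast
  have "a * y * c = a * (y * a) ^ Suc j" unfolding c_def by (simp add: mult.assoc)
  then have "a * y \<in> lann c" unfolding lann_def using \<open>Suc j \<notin> J\<close> unfolding J_def by simp
  with eq aya show False unfolding lann_def by simp
qed

lemma power_diff_in_N: "a - b \<in> N \<Longrightarrow> a ^ k - b ^ k \<in> N"
proof (induct k)
  case 0 then show ?case using N_zero by simp
next
  case (Suc k)
  have "a ^ Suc k - b ^ Suc k = a * (a ^ k - b ^ k) + (a - b) * b ^ k"
    by (simp add: algebra_simps)
  then show ?case using Suc N_mult_left N_mult_right N_add by metis
qed

lemma power_add_in_N_if_orthogonal:
  assumes uv: "u * v \<in> N" and vu: "v * u \<in> N"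
  shows "(u + v) ^ Suc k - (u ^ Suc k + v ^ Suc k) \<in> N"
proof (induct k)
  case 0 then show ?case using N_zero by simp
next
  case (Suc k)
  have "(u + v) ^ Suc (Suc k) - (u ^ Suc (Suc k) + v ^ Suc (Suc k)) =
    (u + v) * ((u + v) ^ Suc k - (u ^ Suc k + v ^ Suc k)) + (u * v) * v ^ k + (v * u) * u ^ k"
    by (simp add: algebra_simps)
  moreover have "(u + v) * ((u + v) ^ Suc k - (u ^ Suc k + v ^ Suc k)) \<in> N"
    using Suc N_mult_left by blast
  moreover have "(u * v) * v ^ k \<in> N" "(v * u) * u ^ k \<in> N"
    using uv vu N_mult_right by blast+
  ultimately show ?case using N_add by simp
qed

end

section \<open>Odd elements of a nil superalgebra\<close>

text \<open>\<open>R True\<close> is the odd and \<open>R False\<close> the even part of a \<open>\<int>/2\<close>-grading.\<close>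
locale nil_odd_superalgebra = maximal_nilpotent_ideal +
  fixes R :: "bool \<Rightarrow> 'b set"
  assumes R_add: "\<And>x y p. x \<in> R p \<Longrightarrow> y \<in> R p \<Longrightarrow> x + y \<in> R p"
    and R_mult: "\<And>x y p q. x \<in> R p \<Longrightarrow> y \<in> R q \<Longrightarrow> x * y \<in> R (p \<noteq> q)"
    and one_R: "1 \<in> R False"
    and R_decomp: "\<And>x. \<exists>e v. e \<in> R False \<and> v \<in> R True \<and> x = e + v"
    and odd_nilpotent: "\<And>x. x \<in> R True \<Longrightarrow> \<exists>n. x ^ n = 0"
begin

lemma R_power: "x \<in> R True \<Longrightarrow> x ^ j \<in> R (odd j)"
proof (induct j)
  case 0 then show ?case using one_R by simp
next
  case (Suc j) then show ?case using R_mult[of x True "x ^ j" "odd j"] by simp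
qed

text \<open>Since \<open>x + y\<close> is nilpotent and \<open>(x + y)\<^sup>2 \<equiv> x y + y x\<close> modulo \<open>N\<close> with orthogonal summands,
  \<open>(x y)\<^sup>k + (y x)\<^sup>k \<in> N\<close>; multiplying by \<open>x\<close> on the left kills the first summand.\<close>
lemma power_mult_in_N_if_squares_in_N:
  assumes x: "x \<in> R True" and y: "y \<in> R True" and xx: "x * x \<in> N" and yy: "y * y \<in> N"
  shows "\<exists>m. (x * y) ^ m \<in> N"
proof -
  obtain n where n: "(x + y) ^ n = 0" using odd_nilpotent[OF R_add[OF x y]] by blast
  define k where "k = Suc n"
  have "2 * k = n + (2 * k - n)" unfolding k_def by simp
  then have "(x + y) ^ (2 * k) = (x + y) ^ n * (x + y) ^ (2 * k - n)"
    by (metis power_add)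
  then have zero: "((x + y) ^ 2) ^ k = 0" using n by (simp add: power_mult)
  have "(x + y) ^ 2 - (x * y + y * x) = x * x + y * y"
    by (simp add: algebra_simps power2_eq_square)
  then have "(x + y) ^ 2 - (x * y + y * x) \<in> N" using xx yy N_add by simp
  then have A: "((x + y) ^ 2) ^ k - (x * y + y * x) ^ k \<in> N" by (rule power_diff_in_N)
  have "(x * y) * (y * x) \<in> N" "(y * x) * (x * y) \<in> N"
    using N_mult_left[OF N_mult_right[OF yy]] N_mult_left[OF N_mult_right[OF xx]]
    by (simp_all add: mult.assoc)
  then have B: "(x * y + y * x) ^ k - ((x * y) ^ k + (y * x) ^ k) \<in> N"
    unfolding k_def by (rule power_add_in_N_if_orthogonal)
  have "- ((x * y) ^ k + (y * x) ^ k) \<in> N" using N_add[OF A B] zero by simp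
  from N_minus[OF this] have "(x * y) ^ k + (y * x) ^ k \<in> N" by (simp add: add.commute)
  then have "x * (x * y) ^ k + x * (y * x) ^ k \<in> N"
    using N_mult_left by (fastforce simp: distrib_left)
  moreover have "x * (x * y) ^ k \<in> N" unfolding k_def using N_mult_right[OF xx]
    by (simp add: mult.assoc)
  ultimately have "x * (y * x) ^ k \<in> N" using N_diff by fastforce
  then have "(x * y) ^ k * x * y \<in> N" using N_mult_right by (simp add: power_mult_commute)
  then have "(x * y) ^ Suc k \<in> N" by (simp only: power_Suc2 mult.assoc)
  then show ?thesis by blast
qed

text \<open>Write \<open>r = e + v\<close> with \<open>e\<close> even and \<open>v\<close> odd. Modulo \<open>N\<close>, \<open>(x r)\<^sup>k\<close> collapses to
  \<open>(x v)\<^sup>k x r\<close>, and \<open>x v\<close> is nilpotent modulo \<open>N\<close> because \<open>(x v)\<^sup>2 = x (v x v)\<close>.\<close>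
lemma mult_nilpotent_mod_N_if_sandwich:
  assumes x: "x \<in> R True" and sandwich: "\<forall>e\<in>R False. x * e * x \<in> N"
  shows "\<exists>m. (x * r) ^ m \<in> N"
proof -
  obtain e v where e: "e \<in> R False" and v: "v \<in> R True" and r: "r = e + v"
    using R_decomp by blast
  have vxv: "v * x * v \<in> R True" using R_mult[OF R_mult[OF v x] v] by simp
  have xx: "x * x \<in> N" using sandwich one_R by fastforce
  have "v * (x * (v * v) * x) * v \<in> N"
    using sandwich R_mult[OF v v] N_mult_left N_mult_right by simp
  then have "(v * x * v) * (v * x * v) \<in> N" by (simp add: mult.assoc)
  then obtain m where "(x * (v * x * v)) ^ m \<in> N"
    using power_mult_in_N_if_squares_in_N[OF x vxv xx] by blast
  moreover have "x * (v * x * v) = (x * v) ^ 2" by (simp add: power2_eq_square mult.assoc)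
  ultimately have xv: "(x * v) ^ (2 * m) \<in> N" by (simp add: power_mult)
  have collapse: "(x * r) ^ Suc k - (x * v) ^ k * (x * r) \<in> N" for k
  proof (induct k)
    case 0 then show ?case using N_zero by simp
  next
    case (Suc k)
    have "(x * r) ^ Suc (Suc k) - (x * v) ^ Suc k * (x * r) =
      ((x * r) ^ Suc k - (x * v) ^ k * (x * r)) * (x * r) + (x * v) ^ k * (x * e * x) * r"
      unfolding r by (simp add: algebra_simps power_Suc2 del: power_Suc)
    moreover have "((x * r) ^ Suc k - (x * v) ^ k * (x * r)) * (x * r) \<in> N"
      using Suc N_mult_right by blast
    moreover have "(x * v) ^ k * (x * e * x) * r \<in> N"
      using sandwich e N_mult_right N_mult_left by blast
    ultimately show ?case using N_add by simp
  qed
  have "(x * r) ^ Suc (2 * m) \<in> N"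
    using N_add[OF collapse[of "2 * m"] N_mult_right[OF xv, of "x * r"]] by simp
  then show ?thesis by blast
qed

lemma odd_in_N_if_sandwich:
  assumes x: "x \<in> R True" and sandwich: "\<forall>e\<in>R False. x * e * x \<in> N"
  shows "x \<in> N"
proof (rule ccontr)
  assume "x \<notin> N"
  then obtain b where b: "b \<notin> N" "\<exists>s. b = x * s"
    and maximal: "\<forall>c. c \<notin> N \<and> (\<exists>s. c = x * s) \<and> lann b \<subseteq> lann c \<longrightarrow> lann c = lann b"
    using ex_maximal_lann[of x "\<lambda>c. \<exists>s. c = x * s"] by (metis mult_1_right)
  then obtain s where bs: "b = x * s" by blast
  have "b * r * b \<in> N" for r
  proof -
    obtain m where "(x * (s * r)) ^ m \<in> N"
      using mult_nilpotent_mod_N_if_sandwich[OF x sandwich] by blast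
    then have "(b * r) ^ m \<in> N" unfolding bs by (simp add: mult.assoc)
    then show ?thesis
    proof (rule sandwich_in_N_if_maximal_lann[OF b(1) maximal, rotated])
      fix j show "\<exists>s'. b * (r * b) ^ j = x * s'" unfolding bs
        by (rule exI[of _ "s * (r * (x * s)) ^ j"]) (simp add: mult.assoc)
    qed
  qed
  then have "b \<in> N" by (rule N_semiprime)
  with b show False by blast
qed

definition odd_lann :: "'b set" where
  "odd_lann = {a. \<forall>v\<in>R True. a * v \<in> N}"

definition odd_biann :: "'b set" where
  "odd_biann = {z. \<forall>a\<in>odd_lann. a * z \<in> N}"

lemma odd_lann_mult_right:
  assumes "a \<in> odd_lann"
  shows "a * r \<in> odd_lann"
proof -
  obtain e u where e: "e \<in> R False" and u: "u \<in> R True" and r: "r = e + u"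
    using R_decomp by blast
  have "a * r * v \<in> N" if v: "v \<in> R True" for v
  proof -
    have "a * (e * v) \<in> N" using assms R_mult[OF e v] unfolding odd_lann_def by simp
    moreover have "a * u * v \<in> N" using assms u N_mult_right unfolding odd_lann_def by blast
    ultimately show ?thesis unfolding r by (simp add: algebra_simps N_add)
  qed
  then show ?thesis unfolding odd_lann_def by blast
qed

lemma odd_subset_odd_biann: "R True \<subseteq> odd_biann"
  unfolding odd_biann_def odd_lann_def by blast

lemma odd_biann_mult_left: "z \<in> odd_biann \<Longrightarrow> r * z \<in> odd_biann"
  using odd_lann_mult_right unfolding odd_biann_def by (simp add: mult.assoc[symmetric])

lemma odd_biann_mult_right: "z \<in> odd_biann \<Longrightarrow> z * r \<in> odd_biann"
  using N_mult_right unfolding odd_biann_def by (simp add: mult.assoc[symmetric])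

definition homogeneous_biann :: "'b \<Rightarrow> bool" where
  "homogeneous_biann b \<longleftrightarrow> b \<in> odd_biann \<and> (\<exists>p. b \<in> R p)"

lemma sandwich_in_N_if_maximal_homogeneous:
  assumes a: "a \<notin> N" "a \<in> R p" "a \<in> odd_biann"
    and maximal: "\<forall>b. b \<notin> N \<and> homogeneous_biann b \<and> lann a \<subseteq> lann b \<longrightarrow> lann b = lann a"
    and y: "y \<in> R (\<not> p)"
  shows "a * y * a \<in> N"
proof -
  obtain n where "(a * y) ^ n = 0" using odd_nilpotent R_mult[OF a(2) y] by fastforce
  then have "(a * y) ^ n \<in> N" using N_zero by simp
  then show ?thesis
  proof (rule sandwich_in_N_if_maximal_lann[OF a(1) maximal, rotated])
    fix j
    have "(y * a) ^ j \<in> R (odd j)" using R_power R_mult[OF y a(2)] by simp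
    then have "a * (y * a) ^ j \<in> R (p \<noteq> odd j)" using R_mult[OF a(2)] by blast
    moreover have "a * (y * a) ^ j \<in> odd_biann" using a(3) odd_biann_mult_right by blast
    ultimately show "homogeneous_biann (a * (y * a) ^ j)"
      unfolding homogeneous_biann_def by blast
  qed
qed

text \<open>The odd element is \<open>a\<close> itself, or \<open>a v\<close> for an odd \<open>v\<close> with \<open>a v \<notin> N\<close>; if there is no
  such \<open>v\<close>, then \<open>a\<close> annihilates the odd part, hence \<open>a B a \<subseteq> N\<close> because \<open>a \<in> odd_biann\<close>.\<close>
lemma ex_odd_sandwich_if_maximal_homogeneous:
  assumes a: "a \<notin> N" "a \<in> R p" "a \<in> odd_biann"
    and maximal: "\<forall>b. b \<notin> N \<and> homogeneous_biann b \<and> lann a \<subseteq> lann b \<longrightarrow> lann b = lann a"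
  shows "\<exists>x\<in>R True. x \<notin> N \<and> (\<forall>e\<in>R False. x * e * x \<in> N)"
proof -
  note aya = sandwich_in_N_if_maximal_homogeneous[OF a maximal]
  show ?thesis
  proof (cases p)
    case True
    then show ?thesis using a aya by auto
  next
    case odd_a: False
    show ?thesis
    proof (cases "\<exists>v\<in>R True. a * v \<notin> N")
      case True
      then obtain v where v: "v \<in> R True" and av: "a * v \<notin> N" by blast
      have "a * v * e * (a * v) \<in> N" if e: "e \<in> R False" for e
      proof -
        have "a * (v * e) * a \<in> N" using aya R_mult[OF v e] odd_a by simp
        from N_mult_right[OF this, of v] show ?thesis by (simp add: mult.assoc)
      qed
      moreover have "a * v \<in> R True" using R_mult[OF a(2) v] odd_a by simp
      ultimately show ?thesis using av by blast
    next
      case False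
      then have "a \<in> odd_lann" unfolding odd_lann_def by blast
      then have "a * r * a \<in> N" for r
        using a(3) odd_biann_mult_left unfolding odd_biann_def by (simp add: mult.assoc)
      then have "a \<in> N" by (rule N_semiprime)
      with a(1) show ?thesis by blast
    qed
  qed
qed

lemma odd_part_subset_N: "R True \<subseteq> N"
proof (rule ccontr)
  assume "\<not> R True \<subseteq> N"
  then obtain a0 where "a0 \<in> R True" "a0 \<notin> N" by blast
  then obtain a where aN: "a \<notin> N" and "homogeneous_biann a"
    and maximal: "\<forall>b. b \<notin> N \<and> homogeneous_biann b \<and> lann a \<subseteq> lann b \<longrightarrow> lann b = lann a"
    using ex_maximal_lann[of a0 homogeneous_biann] odd_subset_odd_biann
    unfolding homogeneous_biann_def by blast
  then obtain p where "a \<in> R p" "a \<in> odd_biann" unfolding homogeneous_biann_def by blast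
  with ex_odd_sandwich_if_maximal_homogeneous[OF aN _ _ maximal] show False
    using odd_in_N_if_sandwich by blast
qed

end

section \<open>Parity parts of an \<open>\<nat>\<close>-graded algebra\<close>

context unital_algebra
begin

definition parity_part :: "(nat \<Rightarrow> 'b set) \<Rightarrow> bool \<Rightarrow> 'b set" where
  "parity_part Bg p = span (\<Union>i\<in>{i. odd i = p}. Bg i)"

lemma parity_part_mult:
  assumes graded: "\<And>i j x y. x \<in> Bg i \<Longrightarrow> y \<in> Bg j \<Longrightarrow> x * y \<in> Bg (i + j)"
    and "x \<in> parity_part Bg p" "y \<in> parity_part Bg q"
  shows "x * y \<in> parity_part Bg (p \<noteq> q)"
  using assms(2,3) unfolding parity_part_def
proof (rule span_mult)
  fix a c assume "a \<in> (\<Union>i\<in>{i. odd i = p}. Bg i)" "c \<in> (\<Union>i\<in>{i. odd i = q}. Bg i)"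
  then obtain i j where "a \<in> Bg i" "odd i = p" "c \<in> Bg j" "odd j = q" by blast
  then have "a * c \<in> Bg (i + j)" "odd (i + j) = (p \<noteq> q)" using graded by auto
  then show "a * c \<in> span (\<Union>i\<in>{i. odd i = (p \<noteq> q)}. Bg i)"
    by (intro span_base) blast
qed

lemma parity_part_decomp:
  assumes "(\<forall>i<n. b i \<in> Bg i)"
  shows "\<exists>e v. e \<in> parity_part Bg False \<and> v \<in> parity_part Bg True \<and> (\<Sum>i<n. b i) = e + v"
proof (intro exI conjI)
  show "(\<Sum>i<n. if odd i then 0 else b i) \<in> parity_part Bg False"
    "(\<Sum>i<n. if odd i then b i else 0) \<in> parity_part Bg True"
    unfolding parity_part_def using assms
    by (intro span_sum; auto intro!: span_base simp: span_zero)+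
  show "(\<Sum>i<n. b i) = (\<Sum>i<n. if odd i then 0 else b i) + (\<Sum>i<n. if odd i then b i else 0)"
    unfolding sum.distrib[symmetric] by (rule sum.cong) auto
qed

end

theorem lemma10p6:
  fixes smul :: "'k::field_char_0 \<Rightarrow> 'b::ring_1 \<Rightarrow> 'b"
    and Bg :: "nat \<Rightarrow> 'b set"
  assumes "alg_closed TYPE('k)"
    and "k_algebra smul"
    and "connected_graded smul Bg"
    and "noetherian_alg smul"
    and "satisfies_PI smul"
    and "generated_in_degree_1 smul Bg"
    and "\<forall>x \<in> module.span smul (\<Union>i\<in>{i. odd i}. Bg i). \<exists>n. x ^ n = 0"
  shows "finite_dim_alg smul"
proof -
  have algebra: "vector_space smul" "\<And>c x y. smul c (x * y) = smul c x * y"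
    "\<And>c x y. smul c (x * y) = x * smul c y"
    using assms(2) unfolding k_algebra_def by blast+
  have left_acc: "\<And>I. (\<forall>n. left_ideal smul (I n)) \<Longrightarrow> incseq I \<Longrightarrow> \<exists>m. \<forall>n\<ge>m. I n = I m"
    using assms(4) unfolding noetherian_alg_def by blast
  interpret left_noetherian_algebra smul
    by (intro left_noetherian_algebra.intro unital_algebra.intro
        left_noetherian_algebra_axioms.intro unital_algebra_axioms.intro algebra left_acc)
  have graded: "\<And>i j x y. x \<in> Bg i \<Longrightarrow> y \<in> Bg j \<Longrightarrow> x * y \<in> Bg (i + j)"
    and decomp: "\<And>x. \<exists>n b. (\<forall>i<n. b i \<in> Bg i) \<and> x = (\<Sum>i<n. b i)"
    and "\<exists>S. finite S \<and> span S = Bg 1" and "Bg 0 = range (\<lambda>c. smul c 1)"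
    using assms(3) unfolding connected_graded_def by blast+
  then have one: "1 \<in> Bg 0" by (metis rangeI scale_one)
  obtain N where "two_sided_ideal smul N" "nilpotent_set N"
    "\<forall>I. two_sided_ideal smul I \<longrightarrow> nilpotent_set I \<longrightarrow> N \<subseteq> I \<longrightarrow> I = N"
    using ex_maximal_nilpotent_ideal by blast
  moreover have "\<exists>e v. e \<in> parity_part Bg False \<and> v \<in> parity_part Bg True \<and> x = e + v" for x
    using decomp[of x] parity_part_decomp by blast
  moreover have "1 \<in> parity_part Bg False"
    unfolding parity_part_def using one by (intro span_base) auto
  ultimately interpret nil_odd_superalgebra smul N "parity_part Bg"
    using parity_part_mult[of Bg, OF graded] assms(7)
    by unfold_locales (simp_all add: parity_part_def span_add)
  have "Bg 1 \<subseteq> parity_part Bg True"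
    unfolding parity_part_def by (rule order_trans[OF _ span_superset]) (use odd_one in blast)
  then have "nilpotent_set (Bg 1)"
    using odd_part_subset_N nilpotent_N nilpotent_set_subset by blast
  with \<open>\<exists>S. finite S \<and> span S = Bg 1\<close> show ?thesis
    using finite_dim_if_nilpotent_generators assms(6)
    unfolding finite_dim_alg_def generated_in_degree_1_def by blast
qed

end
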